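(* Let $n\ge 1$, $N\ge 1$, and let $F=(f_{ij})_{i,j=1}^N$ be a real symmetric positive definite matrix with $f_{ij}\le 0$ for all $i\ne j$. For variables $x_1,\dots,x_N\in\mathbb{R}^n$ define the probability measure $$d\mu(x_1,\dots,x_N) = Z^{-1} e^{-\sum_{i,j=1}^N f_{ij}\, x_i\cdot x_j/2}\, dx_1\cdots dx_N$$ on $(\mathbb{R}^n)^N$, where $Z>0$ is the normalizing constant and $dx_i$ is Lebesgue measure on $\mathbb{R}^n$, and let $E f = \int f\, d\mu$. Let $\mathcal{E}$ be the cone of non-negative (finite) linear combinations of multinomials $\prod_{1\le i\le j\le N}(x_i\cdot x_j)^{n_{i,j}}$ with integers $n_{i,j}\ge 0$. Then for all $f,g\in\mathcal{E}$, $$E f \ge 0 \quad\text{and}\quad E(fg) \ge (E f)(E g).$$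
   Context: $x_i\cdot x_j$ denotes the Euclidean inner product in $\mathbb{R}^n$. *)

theory Defs
  imports "HOL-Analysis.Analysis"
begin

text \<open>Configurations (x_1,...,x_N) with x_i in R^n are elements of real^'n^'k,
  where 'k indexes 1..N and 'n indexes the coordinates of R^n.\<close>

definition gauss_weight :: "real^'k^'k \<Rightarrow> real^'n^'k \<Rightarrow> real" where
  "gauss_weight F x = exp (- (\<Sum>i\<in>UNIV. \<Sum>j\<in>UNIV. F $ i $ j * (x $ i \<bullet> x $ j)) / 2)"

definition gauss_Z :: "real^'k^'k \<Rightarrow> ('n::finite) itself \<Rightarrow> real" where
  "gauss_Z F _ = (LINT x|(lborel :: (real^'n^'k) measure). gauss_weight F x)"

definition gauss_measure :: "real^'k^'k \<Rightarrow> (real^'n^'k) measure" where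
  "gauss_measure F = density lborel (\<lambda>x. ennreal (gauss_weight F x / gauss_Z F TYPE('n)))"

definition gauss_E :: "real^'k^'k \<Rightarrow> (real^'n^'k \<Rightarrow> real) \<Rightarrow> real" where
  "gauss_E F f = integral\<^sup>L (gauss_measure F) f"

definition multinomial :: "('k::{finite,linorder} \<times> 'k \<Rightarrow> nat) \<Rightarrow> ((real,'n::finite) vec, 'k) vec \<Rightarrow> real" where
  "multinomial e x = (\<Prod>p\<in>{(i,j). i \<le> j}. (x $ fst p \<bullet> x $ snd p) ^ e p)"

definition multinomial_cone :: "(((real,'n::finite) vec, 'k::{finite,linorder}) vec \<Rightarrow> real) set" where
  "multinomial_cone = {f. \<exists>S c. finite S \<and> (\<forall>e\<in>S. c e \<ge> 0) \<and>
      f = (\<lambda>x. \<Sum>e\<in>S. c e * multinomial e x)}"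

end

theory Submission
  imports Defs "HOL-Probability.Probability" "HOL-Real_Asymp.Real_Asymp" "HOL-Library.Function_Algebras"
begin

(* Write the weight as exp (- x \<bullet> M x / 2), where M = F \<otimes> I_n acts on configurations
  x \<in> (R^n)^N, and expand everything in coordinate monomials x^p. Gaussian integration by
  parts along a basis direction b gives E[(b \<bullet> M x) x^p] = p_b E[x^(p - e_b)]. Since F is
  positive definite with nonpositive off-diagonal entries, F^-1 is entrywise nonnegative, so
  every coordinate x \<bullet> \<alpha> is a nonnegative combination of the b \<bullet> M x, and E[(x \<bullet> \<alpha>) x^p] is a
  nonnegative combination of moments of lower degree. Induction on the degree, together with
  the Leibniz rule for the lowering p \<mapsto> p - e_b, gives E x^p \<ge> 0 and
  E[x^p x^q] \<ge> E x^p E x^q. Both inequalities pass to nonnegative combinations of monomials,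
  and every multinomial in the x_i \<bullet> x_j is such a combination. *)

lemma integrable_abs_power_gaussian:
  fixes lam s :: real
  assumes "lam > 0"
  shows "integrable lborel (\<lambda>t. \<bar>t + s\<bar> ^ k * exp (- lam * (t + s)\<^sup>2 / 2))"
proof -
  define \<sigma> where "\<sigma> = 1 / sqrt lam"
  have \<sigma>2: "\<sigma>\<^sup>2 = 1 / lam" using assms by (simp add: \<sigma>_def power_divide)
  have "integrable lborel (\<lambda>t. sqrt (2 * pi / lam) * (normal_density (- s) \<sigma> t * \<bar>t - (- s)\<bar> ^ k))"
    using assms by (intro integrable_mult_right integrable_normal_moment_abs) (simp add: \<sigma>_def)
  moreover have "sqrt (2 * pi / lam) * (normal_density (- s) \<sigma> t * \<bar>t - (- s)\<bar> ^ k)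
      = \<bar>t + s\<bar> ^ k * exp (- lam * (t + s)\<^sup>2 / 2)" for t
  proof -
    have "sqrt (2 * pi / lam) * (1 / sqrt (2 * pi * \<sigma>\<^sup>2)) = 1"
      using assms by (simp add: \<sigma>2 real_sqrt_divide)
    moreover have "- (t - (- s))\<^sup>2 / (2 * \<sigma>\<^sup>2) = - lam * (t + s)\<^sup>2 / 2"
      using assms by (simp add: \<sigma>2 field_simps)
    ultimately show ?thesis
      using assms unfolding normal_density_def by (simp add: algebra_simps)
  qed
  ultimately show ?thesis by (simp only:)
qed

lemma integrable_power_dominated_by_gaussian:
  fixes E :: "real \<Rightarrow> real" and lam s :: real
  assumes "lam > 0" and "continuous_on UNIV E"
    and "\<And>t. \<bar>E t\<bar> \<le> exp (- lam * (s + t)\<^sup>2 / 2)"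
  shows "integrable lborel (\<lambda>t. (s + t) ^ k * E t)"
proof (rule Bochner_Integration.integrable_bound)
  show "integrable lborel (\<lambda>t. \<bar>t + s\<bar> ^ k * exp (- lam * (t + s)\<^sup>2 / 2))"
    using integrable_abs_power_gaussian[OF assms(1)] .
  show "(\<lambda>t. (s + t) ^ k * E t) \<in> borel_measurable lborel"
    using assms(2) by (auto intro!: borel_measurable_continuous_onI continuous_intros)
  show "AE t in lborel. norm ((s + t) ^ k * E t) \<le> norm (\<bar>t + s\<bar> ^ k * exp (- lam * (t + s)\<^sup>2 / 2))"
    using assms(3) by (intro AE_I2) (simp add: abs_mult power_abs add.commute mult_left_mono)
qed

lemma integral_eq_0_if_antiderivative_vanishes_at_infinity:
  fixes f G :: "real \<Rightarrow> real"
  assumes "\<And>t. (G has_real_derivative f t) (at t)" and "continuous_on UNIV f"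
    and "integrable lborel f" and "(G \<longlongrightarrow> 0) at_top" and "(G \<longlongrightarrow> 0) at_bot"
  shows "integral\<^sup>L lborel f = 0"
proof -
  have "(LBINT t=-\<infinity>..\<infinity>. f t) = 0 - 0"
    by (rule interval_integral_FTC_integrable[where F = G])
      (use assms in \<open>auto simp: has_real_derivative_iff_has_vector_derivative[symmetric]
         ereal_tendsto_simps1 set_integrable_def continuous_on_eq_continuous_at\<close>)
  then show ?thesis
    by (simp add: interval_lebesgue_integral_def einterval_def set_lebesgue_integral_def)
qed

text \<open>The integrand is the derivative of \<open>(s + t)^k * exp (- Q t / 2)\<close> with
  \<open>Q t = Q0 + 2 t L0 + t^2 q\<close>, a quadratic dominating a Gaussian.\<close>
lemma integral_deriv_power_gaussian_eq_0:
  fixes s L0 q Q0 lam :: real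
  assumes lam: "lam > 0" and dominates: "\<And>t. lam * (s + t)\<^sup>2 \<le> Q0 + 2 * t * L0 + t\<^sup>2 * q"
  shows "(LINT t|lborel. (real k * (s + t) ^ (k - 1) - (L0 + t * q) * (s + t) ^ k)
           * exp (- (Q0 + 2 * t * L0 + t\<^sup>2 * q) / 2)) = 0"
proof (rule integral_eq_0_if_antiderivative_vanishes_at_infinity)
  define E where "E t = exp (- (Q0 + 2 * t * L0 + t\<^sup>2 * q) / 2)" for t
  have E_bound: "\<bar>E t\<bar> \<le> exp (- lam * (s + t)\<^sup>2 / 2)" for t
    unfolding E_def using dominates[of t] by simp
  have E_cont: "continuous_on UNIV E"
    unfolding E_def by (intro continuous_intros) simp
  show "((\<lambda>t. (s + t) ^ k * E t) has_real_derivative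
      (real k * (s + t) ^ (k - 1) - (L0 + t * q) * (s + t) ^ k) * E t) (at t)" for t
    unfolding E_def
    by (rule derivative_eq_intros refl | simp)+ (simp add: field_simps power2_eq_square)
  show "continuous_on UNIV (\<lambda>t. (real k * (s + t) ^ (k - 1) - (L0 + t * q) * (s + t) ^ k) * E t)"
    using E_cont by (intro continuous_intros)
  have integrable_power_E: "integrable lborel (\<lambda>t. (s + t) ^ j * E t)" for j
    by (rule integrable_power_dominated_by_gaussian[OF lam E_cont E_bound])
  have "(\<lambda>t. (real k * (s + t) ^ (k - 1) - (L0 + t * q) * (s + t) ^ k) * E t)
      = (\<lambda>t. real k * ((s + t) ^ (k - 1) * E t) - (L0 - s * q) * ((s + t) ^ k * E t)
             - q * ((s + t) ^ Suc k * E t))"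
    by (auto simp: algebra_simps)
  then show "integrable lborel (\<lambda>t. (real k * (s + t) ^ (k - 1) - (L0 + t * q) * (s + t) ^ k) * E t)"
    by (simp only:) (intro Bochner_Integration.integrable_diff integrable_mult_right integrable_power_E)
  have bound: "\<forall>t. norm ((s + t) ^ k * E t) \<le> \<bar>s + t\<bar> ^ k * exp (- lam * (s + t)\<^sup>2 / 2)"
    using E_bound by (simp add: abs_mult power_abs mult_left_mono)
  have "((\<lambda>t. \<bar>s + t\<bar> ^ k * exp (- lam * (s + t)\<^sup>2 / 2)) \<longlongrightarrow> 0) at_top"
    using lam by real_asymp
  then show "((\<lambda>t. (s + t) ^ k * E t) \<longlongrightarrow> 0) at_top"
    by (rule Lim_null_comparison[OF always_eventually[OF bound]])
  have "((\<lambda>t. \<bar>s + t\<bar> ^ k * exp (- lam * (s + t)\<^sup>2 / 2)) \<longlongrightarrow> 0) at_bot"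
    using lam by real_asymp
  then show "((\<lambda>t. (s + t) ^ k * E t) \<longlongrightarrow> 0) at_bot"
    by (rule Lim_null_comparison[OF always_eventually[OF bound]])
qed

lemma lborel_integral_eq_0_if_line_integrals_eq_0:
  fixes D :: "'a::euclidean_space \<Rightarrow> real"
  assumes \<beta>: "\<beta> \<in> Basis" and D_measurable: "D \<in> borel_measurable borel"
    and D_integrable: "integrable lborel D"
    and lines: "\<And>y. (LINT t|lborel. D (y + t *\<^sub>R \<beta>)) = 0"
  shows "(LINT x|lborel. D x) = 0"
proof -
  interpret product_sigma_finite "\<lambda>_::'a. (lborel::real measure)" by standard
  define S where "S = (\<lambda>f. \<Sum>b\<in>Basis. f b *\<^sub>R b :: 'a)"
  have S_measurable: "S \<in> measurable (Pi\<^sub>M Basis (\<lambda>_. lborel)) borel"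
    unfolding S_def by measurable
  have lborel_distr: "lborel = distr (Pi\<^sub>M Basis (\<lambda>_. lborel)) borel S"
    unfolding S_def by (rule lborel_eq)
  have Basis_insert: "Basis = insert \<beta> (Basis - {\<beta>})" using \<beta> by auto
  have "integrable (Pi\<^sub>M Basis (\<lambda>_. lborel)) (\<lambda>f. D (S f))"
    using D_integrable lborel_distr integrable_distr_eq[OF S_measurable D_measurable] by simp
  then have integrable_product: "integrable (Pi\<^sub>M (insert \<beta> (Basis - {\<beta>})) (\<lambda>_. lborel)) (\<lambda>f. D (S f))"
    using Basis_insert by simp
  have line: "S (x(\<beta> := t)) = (\<Sum>b\<in>Basis - {\<beta>}. x b *\<^sub>R b) + t *\<^sub>R \<beta>" for x t
    unfolding S_def using \<beta>
    by (subst sum.remove[OF finite_Basis \<beta>]) (auto intro!: sum.cong simp: add.commute)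
  have "(LINT x|lborel. D x) = integral\<^sup>L (Pi\<^sub>M Basis (\<lambda>_. lborel)) (\<lambda>f. D (S f))"
    unfolding lborel_distr by (rule integral_distr[OF S_measurable D_measurable])
  also have "\<dots> = integral\<^sup>L (Pi\<^sub>M (insert \<beta> (Basis - {\<beta>})) (\<lambda>_. lborel)) (\<lambda>f. D (S f))"
    using Basis_insert by simp
  also have "\<dots> = (\<integral>x. (\<integral>t. D (S (x(\<beta> := t))) \<partial>lborel) \<partial>Pi\<^sub>M (Basis - {\<beta>}) (\<lambda>_. lborel))"
    by (rule product_integral_insert[OF _ _ integrable_product]) auto
  also have "\<dots> = 0"
    unfolding line lines by simp
  finally show ?thesis .
qed

definition coord_monomial :: "('a::euclidean_space \<Rightarrow> nat) \<Rightarrow> 'a \<Rightarrow> real" where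
  "coord_monomial p x = (\<Prod>b\<in>Basis. (x \<bullet> b) ^ p b)"

definition monomial_degree :: "('a::euclidean_space \<Rightarrow> nat) \<Rightarrow> nat" where
  "monomial_degree p = (\<Sum>b\<in>Basis. p b)"

lemma coord_monomial_eq_1: "(\<And>b. b \<in> Basis \<Longrightarrow> p b = 0) \<Longrightarrow> coord_monomial p x = 1"
  unfolding coord_monomial_def by (intro prod.neutral) auto

lemma coord_monomial_add: "coord_monomial (p + q) x = coord_monomial p x * coord_monomial q x"
  unfolding coord_monomial_def by (simp add: power_add prod.distrib)

lemma coord_monomial_cong: "(\<And>b. b \<in> Basis \<Longrightarrow> p b = q b) \<Longrightarrow> coord_monomial p = coord_monomial q"
  unfolding coord_monomial_def by (intro ext prod.cong) auto

lemma continuous_on_coord_monomial: "continuous_on S (coord_monomial p)"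
  unfolding coord_monomial_def by (intro continuous_intros)

lemma inner_Basis_mult_coord_monomial:
  assumes "\<gamma> \<in> Basis"
  shows "(x \<bullet> \<gamma>) * coord_monomial p x = coord_monomial (p(\<gamma> := Suc (p \<gamma>))) x"
proof -
  have "(\<Prod>b\<in>Basis - {\<gamma>}. (x \<bullet> b) ^ (p(\<gamma> := Suc (p \<gamma>))) b) = (\<Prod>b\<in>Basis - {\<gamma>}. (x \<bullet> b) ^ p b)"
    by (intro prod.cong) auto
  then show ?thesis
    unfolding coord_monomial_def prod.remove[OF finite_Basis assms] by simp
qed

lemma coord_monomial_line:
  assumes \<beta>: "\<beta> \<in> Basis"
  shows "coord_monomial p (y + t *\<^sub>R \<beta>) = (\<Prod>b\<in>Basis - {\<beta>}. (y \<bullet> b) ^ p b) * (y \<bullet> \<beta> + t) ^ p \<beta>"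
proof -
  have "(\<Prod>b\<in>Basis - {\<beta>}. ((y + t *\<^sub>R \<beta>) \<bullet> b) ^ p b) = (\<Prod>b\<in>Basis - {\<beta>}. (y \<bullet> b) ^ p b)"
    using \<beta> by (intro prod.cong refl) (auto simp: inner_add_left inner_not_same_Basis)
  then show ?thesis
    unfolding coord_monomial_def prod.remove[OF finite_Basis \<beta>]
    using \<beta> by (simp add: inner_add_left)
qed

lemma monomial_degree_lower_le: "monomial_degree (p(b := p b - 1)) \<le> monomial_degree p"
  unfolding monomial_degree_def by (intro sum_mono) auto

lemma monomial_degree_lower_less:
  "b \<in> Basis \<Longrightarrow> 0 < p b \<Longrightarrow> monomial_degree (p(b := p b - 1)) < monomial_degree p"
  unfolding monomial_degree_def by (intro sum_strict_mono_ex1) auto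

lemma exponent_raise_cases:
  fixes p :: "'a::euclidean_space \<Rightarrow> nat"
  obtains (zero) "\<And>b. b \<in> Basis \<Longrightarrow> p b = 0"
    | (raise) \<alpha> p0 where "\<alpha> \<in> Basis" "p = p0(\<alpha> := Suc (p0 \<alpha>))"
        "monomial_degree p0 < monomial_degree p"
proof (cases "\<forall>b\<in>Basis. p b = 0")
  case False
  then obtain \<alpha> where "\<alpha> \<in> Basis" "0 < p \<alpha>" by auto
  then show ?thesis
    using raise[of \<alpha> "p(\<alpha> := p \<alpha> - 1)"] monomial_degree_lower_less by fastforce
qed (use zero in blast)

text \<open>The Leibniz rule \<open>\<partial>\<^sub>b (x^p x^q) = \<partial>\<^sub>b x^p \<cdot> x^q + x^p \<cdot> \<partial>\<^sub>b x^q\<close>, written on exponents.\<close>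
lemma lower_exponent_add_split:
  fixes p q :: "'a \<Rightarrow> nat"
  shows "real ((p + q) b) * h ((p + q)(b := (p + q) b - 1))
    = real (p b) * h (p(b := p b - 1) + q) + real (q b) * h (p + q(b := q b - 1))"
proof -
  have "0 < p b \<Longrightarrow> (p + q)(b := (p + q) b - 1) = p(b := p b - 1) + q"
    and "0 < q b \<Longrightarrow> (p + q)(b := (p + q) b - 1) = p + q(b := q b - 1)"
    by (auto simp: fun_eq_iff)
  then have "real (p b) * h ((p + q)(b := (p + q) b - 1)) = real (p b) * h (p(b := p b - 1) + q)"
    and "real (q b) * h ((p + q)(b := (p + q) b - 1)) = real (q b) * h (p + q(b := q b - 1))"
    by (cases "p b = 0"; cases "q b = 0"; simp)+
  moreover have "real ((p + q) b) * h ((p + q)(b := (p + q) b - 1))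
      = real (p b) * h ((p + q)(b := (p + q) b - 1)) + real (q b) * h ((p + q)(b := (p + q) b - 1))"
    by (simp add: distrib_right)
  ultimately show ?thesis by (simp only:)
qed

inductive nonneg_coeff_poly :: "('a::euclidean_space \<Rightarrow> real) \<Rightarrow> bool" where
  monomial: "nonneg_coeff_poly (coord_monomial p)"
| add: "nonneg_coeff_poly f \<Longrightarrow> nonneg_coeff_poly g \<Longrightarrow> nonneg_coeff_poly (\<lambda>x. f x + g x)"
| scale: "0 \<le> c \<Longrightarrow> nonneg_coeff_poly f \<Longrightarrow> nonneg_coeff_poly (\<lambda>x. c * f x)"

lemma nonneg_coeff_poly_const: "0 \<le> c \<Longrightarrow> nonneg_coeff_poly (\<lambda>_. c)"
  using nonneg_coeff_poly.scale[OF _ nonneg_coeff_poly.monomial[of "\<lambda>_. 0"]]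
  by (simp add: coord_monomial_eq_1)

lemma nonneg_coeff_poly_mult:
  assumes "nonneg_coeff_poly f" and "nonneg_coeff_poly g"
  shows "nonneg_coeff_poly (\<lambda>x. f x * g x)"
  using assms(1)
proof induction
  case (monomial p)
  from assms(2) show ?case
  proof induction
    case (monomial q)
    have "(\<lambda>x. coord_monomial p x * coord_monomial q x) = coord_monomial (p + q)"
      by (simp add: coord_monomial_add fun_eq_iff)
    then show ?case by (simp add: nonneg_coeff_poly.monomial)
  next
    case (add g1 g2)
    then show ?case by (simp add: distrib_left nonneg_coeff_poly.add)
  next
    case (scale c g)
    then show ?case by (simp add: mult.left_commute nonneg_coeff_poly.scale)
  qed
next
  case (add f1 f2)
  then show ?case by (simp add: distrib_right nonneg_coeff_poly.add)
next
  case (scale c f)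
  then show ?case by (simp add: mult.assoc nonneg_coeff_poly.scale)
qed

lemma nonneg_coeff_poly_sum:
  "finite I \<Longrightarrow> (\<And>i. i \<in> I \<Longrightarrow> nonneg_coeff_poly (f i)) \<Longrightarrow> nonneg_coeff_poly (\<lambda>x. \<Sum>i\<in>I. f i x)"
  by (induction I rule: finite_induct) (simp_all add: nonneg_coeff_poly_const nonneg_coeff_poly.add)

lemma nonneg_coeff_poly_prod:
  "finite I \<Longrightarrow> (\<And>i. i \<in> I \<Longrightarrow> nonneg_coeff_poly (f i)) \<Longrightarrow> nonneg_coeff_poly (\<lambda>x. \<Prod>i\<in>I. f i x)"
  by (induction I rule: finite_induct) (simp_all add: nonneg_coeff_poly_const nonneg_coeff_poly_mult)

lemma nonneg_coeff_poly_power: "nonneg_coeff_poly f \<Longrightarrow> nonneg_coeff_poly (\<lambda>x. f x ^ n)"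
  by (induction n) (simp_all add: nonneg_coeff_poly_const nonneg_coeff_poly_mult)

lemma continuous_on_nonneg_coeff_poly: "nonneg_coeff_poly f \<Longrightarrow> continuous_on S f"
  by (induction rule: nonneg_coeff_poly.induct) (auto intro!: continuous_intros continuous_on_coord_monomial)

lemma integrable_dominated_by_coordinate_product:
  fixes f :: "'a::euclidean_space \<Rightarrow> real"
  assumes "f \<in> borel_measurable lborel"
    and "\<And>b. integrable lborel (h b)" and "\<And>b t. 0 \<le> h b t" and "\<And>b. h b \<in> borel_measurable borel"
    and "\<And>x. norm (f x) \<le> (\<Prod>b\<in>Basis. h b (x \<bullet> b))"
  shows "integrable lborel f"
proof -
  have "(\<integral>\<^sup>+x. ennreal (norm (f x)) \<partial>lborel) \<le> (\<integral>\<^sup>+x. (\<Prod>b\<in>Basis. ennreal (h b (x \<bullet> b))) \<partial>lborel)"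
    using assms(3,5) by (intro nn_integral_mono) (simp add: prod_ennreal prod_nonneg)
  also have "\<dots> = (\<Prod>b\<in>Basis. \<integral>\<^sup>+t. ennreal (h b t) \<partial>lborel)"
    by (rule nn_integral_lborel_prod) (auto simp: assms(3,4))
  also have "\<dots> = (\<Prod>b\<in>Basis. ennreal (integral\<^sup>L lborel (h b)))"
    by (intro prod.cong refl nn_integral_eq_integral assms(2)) (simp add: assms(3))
  also have "\<dots> < \<infinity>"
    by (simp add: prod_ennreal integral_nonneg_AE assms(3))
  finally show ?thesis
    using assms(1) by (simp add: integrable_iff_bounded)
qed

locale gaussian_form =
  fixes M :: "'a::euclidean_space \<Rightarrow> 'a"
  assumes linear_M: "linear M"
    and self_adjoint: "\<And>u v. u \<bullet> M v = M u \<bullet> v"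
    and posdef: "\<And>x. x \<noteq> 0 \<Longrightarrow> 0 < x \<bullet> M x"
begin

definition weight :: "'a \<Rightarrow> real" where
  "weight x = exp (- (x \<bullet> M x) / 2)"

definition normalizer :: real where
  "normalizer = (LINT x|lborel. weight x)"

definition expectation :: "('a \<Rightarrow> real) \<Rightarrow> real" where
  "expectation f = (LINT x|lborel. weight x * f x) / normalizer"

abbreviation moment :: "('a \<Rightarrow> nat) \<Rightarrow> real" where
  "moment p \<equiv> expectation (coord_monomial p)"

lemma continuous_on_M: "continuous_on S M"
  using linear_M by (simp add: linear_conv_bounded_linear linear_continuous_on)

lemma continuous_on_weight: "continuous_on S weight"
  unfolding weight_def by (intro continuous_intros continuous_on_M) simp

lemma coercive:
  obtains lam where "0 < lam" and "\<And>x. lam * (norm x)\<^sup>2 \<le> x \<bullet> M x"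
proof -
  obtain b :: 'a where "b \<in> Basis" using nonempty_Basis by blast
  then have "sphere (0::'a) 1 \<noteq> {}" by (metis norm_Basis mem_sphere_0 empty_iff)
  moreover have "continuous_on (sphere 0 1) (\<lambda>x. x \<bullet> M x)"
    by (intro continuous_intros continuous_on_M)
  ultimately obtain u where u: "u \<in> sphere 0 1" "\<And>y. y \<in> sphere 0 1 \<Longrightarrow> u \<bullet> M u \<le> y \<bullet> M y"
    using continuous_attains_inf[OF compact_sphere, of 0 1 "\<lambda>x. x \<bullet> M x"] by blast
  have "0 < u \<bullet> M u" using u(1) by (intro posdef) auto
  moreover have "(u \<bullet> M u) * (norm x)\<^sup>2 \<le> x \<bullet> M x" for x
  proof (cases "x = 0")
    case False
    define w where "w = x /\<^sub>R norm x"
    have "w \<in> sphere 0 1" using False by (simp add: w_def)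
    then have "u \<bullet> M u \<le> w \<bullet> M w" by (rule u(2))
    also have "w \<bullet> M w = (x \<bullet> M x) / (norm x)\<^sup>2"
      using linear_M by (simp add: w_def linear_scale power2_eq_square divide_inverse)
    finally show ?thesis using False by (simp add: pos_le_divide_eq)
  qed simp
  ultimately show ?thesis using that by blast
qed

lemma weight_le_prod:
  assumes "\<And>x. lam * (norm x)\<^sup>2 \<le> x \<bullet> M x"
  shows "weight x \<le> (\<Prod>b\<in>Basis. exp (- lam * (x \<bullet> b)\<^sup>2 / 2))"
proof -
  have "(norm x)\<^sup>2 = (\<Sum>b\<in>Basis. (x \<bullet> b)\<^sup>2)"
    unfolding power2_norm_eq_inner by (subst euclidean_inner) (simp add: power2_eq_square)
  have "weight x \<le> exp (- lam * (norm x)\<^sup>2 / 2)"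
    unfolding weight_def using assms[of x] by simp
  also have "\<dots> = (\<Prod>b\<in>Basis. exp (- lam * (x \<bullet> b)\<^sup>2 / 2))"
    unfolding \<open>(norm x)\<^sup>2 = _\<close> exp_sum[OF finite_Basis, symmetric]
    by (simp add: sum_distrib_left sum_divide_distrib)
  finally show ?thesis .
qed

lemma integrable_weight_coord_monomial: "integrable lborel (\<lambda>x. weight x * coord_monomial p x)"
proof -
  obtain lam where lam: "0 < lam" "\<And>x. lam * (norm x)\<^sup>2 \<le> x \<bullet> M x" using coercive by blast
  define h where "h b t = \<bar>t\<bar> ^ p b * exp (- lam * t\<^sup>2 / 2)" for b t
  show ?thesis
  proof (rule integrable_dominated_by_coordinate_product)
    show "(\<lambda>x. weight x * coord_monomial p x) \<in> borel_measurable lborel"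
      by (simp add: borel_measurable_continuous_onI continuous_intros
          continuous_on_weight continuous_on_coord_monomial)
    show "integrable lborel (h b)" for b
      unfolding h_def using integrable_abs_power_gaussian[OF lam(1), of 0 "p b"] by simp
    show "0 \<le> h b t" for b t
      unfolding h_def by simp
    show "h b \<in> borel_measurable borel" for b
      unfolding h_def by measurable
    have "(\<Prod>b\<in>Basis. \<bar>x \<bullet> b\<bar> ^ p b) * weight x
        \<le> (\<Prod>b\<in>Basis. \<bar>x \<bullet> b\<bar> ^ p b) * (\<Prod>b\<in>Basis. exp (- lam * (x \<bullet> b)\<^sup>2 / 2))" for x
      using weight_le_prod[OF lam(2)] by (intro mult_left_mono prod_nonneg) auto
    moreover have "norm (weight x * coord_monomial p x) = (\<Prod>b\<in>Basis. \<bar>x \<bullet> b\<bar> ^ p b) * weight x" for x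
      unfolding coord_monomial_def by (simp add: weight_def abs_mult abs_prod power_abs)
    ultimately show "norm (weight x * coord_monomial p x) \<le> (\<Prod>b\<in>Basis. h b (x \<bullet> b))" for x
      unfolding h_def prod.distrib by simp
  qed
qed

lemma integrable_weight_inner_coord_monomial:
  "integrable lborel (\<lambda>x. weight x * ((v \<bullet> x) * coord_monomial p x))"
proof -
  have "(\<lambda>x. weight x * ((v \<bullet> x) * coord_monomial p x))
      = (\<lambda>x. \<Sum>\<gamma>\<in>Basis. (v \<bullet> \<gamma>) * (weight x * coord_monomial (p(\<gamma> := Suc (p \<gamma>))) x))"
    by (subst euclidean_inner)
      (simp add: sum_distrib_left sum_distrib_right inner_Basis_mult_coord_monomial[symmetric] mult_ac)
  then show ?thesis
    by (simp only:) (intro Bochner_Integration.integrable_sum integrable_mult_right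
        integrable_weight_coord_monomial)
qed

lemma quadratic_form_line:
  "(y + t *\<^sub>R \<beta>) \<bullet> M (y + t *\<^sub>R \<beta>) = y \<bullet> M y + 2 * t * (\<beta> \<bullet> M y) + t\<^sup>2 * (\<beta> \<bullet> M \<beta>)"
proof -
  have "M (y + t *\<^sub>R \<beta>) = M y + t *\<^sub>R M \<beta>"
    using linear_M by (simp add: linear_add linear_scale)
  moreover have "y \<bullet> M \<beta> = \<beta> \<bullet> M y"
    using self_adjoint[of y \<beta>] by (simp add: inner_commute)
  ultimately show ?thesis
    by (simp add: inner_add_left inner_add_right algebra_simps power2_eq_square)
qed

text \<open>The integrand is the partial derivative of \<open>weight x * coord_monomial p x\<close> in
  direction \<open>\<beta>\<close>, restricted to a line parallel to \<open>\<beta>\<close>.\<close>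
lemma line_integral_partial_deriv_eq_0:
  assumes \<beta>: "\<beta> \<in> Basis"
  shows "(LINT t|lborel. real (p \<beta>) * (weight (y + t *\<^sub>R \<beta>) * coord_monomial (p(\<beta> := p \<beta> - 1)) (y + t *\<^sub>R \<beta>))
    - weight (y + t *\<^sub>R \<beta>) * ((\<beta> \<bullet> M (y + t *\<^sub>R \<beta>)) * coord_monomial p (y + t *\<^sub>R \<beta>))) = 0"
proof -
  obtain lam where lam: "0 < lam" "\<And>x. lam * (norm x)\<^sup>2 \<le> x \<bullet> M x" using coercive by blast
  define K where "K = (\<Prod>b\<in>Basis - {\<beta>}. (y \<bullet> b) ^ p b)"
  define s where "s = y \<bullet> \<beta>"
  define L0 where "L0 = \<beta> \<bullet> M y"
  define q where "q = \<beta> \<bullet> M \<beta>"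
  define Q0 where "Q0 = y \<bullet> M y"
  define k where "k = p \<beta>"
  have quadratic: "(y + t *\<^sub>R \<beta>) \<bullet> M (y + t *\<^sub>R \<beta>) = Q0 + 2 * t * L0 + t\<^sup>2 * q" for t
    unfolding quadratic_form_line Q0_def L0_def q_def ..
  have "(\<Prod>b\<in>Basis - {\<beta>}. (y \<bullet> b) ^ (p(\<beta> := p \<beta> - 1)) b) = K"
    unfolding K_def by (intro prod.cong refl) auto
  then have "real (p \<beta>) * (weight (y + t *\<^sub>R \<beta>) * coord_monomial (p(\<beta> := p \<beta> - 1)) (y + t *\<^sub>R \<beta>))
      - weight (y + t *\<^sub>R \<beta>) * ((\<beta> \<bullet> M (y + t *\<^sub>R \<beta>)) * coord_monomial p (y + t *\<^sub>R \<beta>))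
    = K * ((real k * (s + t) ^ (k - 1) - (L0 + t * q) * (s + t) ^ k)
        * exp (- (Q0 + 2 * t * L0 + t\<^sup>2 * q) / 2))" for t
  proof -
    have "coord_monomial p (y + t *\<^sub>R \<beta>) = K * (s + t) ^ k"
      unfolding K_def s_def k_def by (rule coord_monomial_line[OF \<beta>])
    moreover have "coord_monomial (p(\<beta> := p \<beta> - 1)) (y + t *\<^sub>R \<beta>) = K * (s + t) ^ (k - 1)"
      using coord_monomial_line[OF \<beta>, of "p(\<beta> := p \<beta> - 1)" y t] \<open>_ = K\<close> by (simp add: s_def k_def)
    moreover have "\<beta> \<bullet> M (y + t *\<^sub>R \<beta>) = L0 + t * q"
      using linear_M by (simp add: L0_def q_def linear_add linear_scale inner_add_right)
    moreover have "weight (y + t *\<^sub>R \<beta>) = exp (- (Q0 + 2 * t * L0 + t\<^sup>2 * q) / 2)"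
      unfolding weight_def quadratic ..
    ultimately show ?thesis
      by (simp add: k_def algebra_simps)
  qed
  moreover have "lam * (s + t)\<^sup>2 \<le> Q0 + 2 * t * L0 + t\<^sup>2 * q" for t
  proof -
    have "\<bar>s + t\<bar> \<le> norm (y + t *\<^sub>R \<beta>)"
      using Basis_le_norm[OF \<beta>, of "y + t *\<^sub>R \<beta>"] \<beta> by (simp add: s_def inner_add_left)
    then have "(s + t)\<^sup>2 \<le> (norm (y + t *\<^sub>R \<beta>))\<^sup>2"
      by (metis abs_ge_zero power2_abs power_mono)
    then have "lam * (s + t)\<^sup>2 \<le> lam * (norm (y + t *\<^sub>R \<beta>))\<^sup>2"
      using lam(1) by (simp add: mult_left_mono)
    also have "\<dots> \<le> (y + t *\<^sub>R \<beta>) \<bullet> M (y + t *\<^sub>R \<beta>)"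
      by (rule lam(2))
    finally show ?thesis
      unfolding quadratic .
  qed
  ultimately show ?thesis
    using integral_deriv_power_gaussian_eq_0[OF lam(1)] by simp
qed

lemma gaussian_integration_by_parts:
  assumes \<beta>: "\<beta> \<in> Basis"
  shows "(LINT x|lborel. weight x * ((\<beta> \<bullet> M x) * coord_monomial p x))
       = real (p \<beta>) * (LINT x|lborel. weight x * coord_monomial (p(\<beta> := p \<beta> - 1)) x)"
proof -
  define D where "D x = real (p \<beta>) * (weight x * coord_monomial (p(\<beta> := p \<beta> - 1)) x)
    - weight x * ((\<beta> \<bullet> M x) * coord_monomial p x)" for x
  have integrable_lhs: "integrable lborel (\<lambda>x. weight x * ((\<beta> \<bullet> M x) * coord_monomial p x))"
    using integrable_weight_inner_coord_monomial[of "M \<beta>"] by (simp add: self_adjoint)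
  have integrable_rhs: "integrable lborel (\<lambda>x. real (p \<beta>) * (weight x * coord_monomial (p(\<beta> := p \<beta> - 1)) x))"
    by (intro integrable_mult_right integrable_weight_coord_monomial)
  have "continuous_on UNIV D"
    unfolding D_def
    by (intro continuous_intros continuous_on_weight continuous_on_coord_monomial continuous_on_M)
  then have "D \<in> borel_measurable borel"
    by (rule borel_measurable_continuous_onI)
  moreover have "integrable lborel D"
    unfolding D_def using integrable_lhs integrable_rhs by simp
  moreover have "(LINT t|lborel. D (y + t *\<^sub>R \<beta>)) = 0" for y
    unfolding D_def by (rule line_integral_partial_deriv_eq_0[OF \<beta>])
  ultimately have "(LINT x|lborel. D x) = 0"
    by (rule lborel_integral_eq_0_if_line_integrals_eq_0[OF \<beta>])
  then show ?thesis
    using integrable_lhs integrable_rhs by (simp add: D_def)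
qed

lemma normalizer_pos: "0 < normalizer"
proof -
  have integrable: "integrable lborel weight"
    using integrable_weight_coord_monomial[of "\<lambda>_. 0"] by (simp add: coord_monomial_eq_1)
  have nonneg: "AE x in lborel. 0 \<le> weight x" by (simp add: weight_def)
  have "normalizer \<noteq> 0"
  proof
    assume "normalizer = 0"
    then have "AE x in lborel. weight x = 0"
      using integral_nonneg_eq_0_iff_AE[OF integrable nonneg] by (simp add: normalizer_def)
    then have "AE x in (lborel::'a measure). False" by (simp add: weight_def)
    then show False by (simp add: trivial_limit_def[symmetric] ae_filter_eq_bot_iff)
  qed
  moreover have "0 \<le> normalizer"
    unfolding normalizer_def by (rule integral_nonneg_AE[OF nonneg])
  ultimately show ?thesis by simp
qed

lemma moment_eq_1: "(\<And>b. b \<in> Basis \<Longrightarrow> p b = 0) \<Longrightarrow> moment p = 1"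
  using normalizer_pos by (simp add: expectation_def normalizer_def coord_monomial_eq_1)

lemma moment_raise:
  assumes \<alpha>: "\<alpha> \<in> Basis" and V: "M V = \<alpha>"
  shows "moment (p(\<alpha> := Suc (p \<alpha>))) = (\<Sum>b\<in>Basis. (V \<bullet> b) * (real (p b) * moment (p(b := p b - 1))))"
proof -
  have "x \<bullet> \<alpha> = (\<Sum>b\<in>Basis. (V \<bullet> b) * (b \<bullet> M x))" for x
  proof -
    have "x \<bullet> \<alpha> = M x \<bullet> V" using self_adjoint[of x V] V by simp
    also have "\<dots> = (\<Sum>b\<in>Basis. (M x \<bullet> b) * (V \<bullet> b))" by (rule euclidean_inner)
    finally show ?thesis by (simp add: inner_commute mult.commute)
  qed
  then have "weight x * coord_monomial (p(\<alpha> := Suc (p \<alpha>))) x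
      = (\<Sum>b\<in>Basis. (V \<bullet> b) * (weight x * ((b \<bullet> M x) * coord_monomial p x)))" for x
    by (simp add: inner_Basis_mult_coord_monomial[OF \<alpha>, symmetric] sum_distrib_left sum_distrib_right mult_ac)
  then have "(LINT x|lborel. weight x * coord_monomial (p(\<alpha> := Suc (p \<alpha>))) x)
      = (\<Sum>b\<in>Basis. (V \<bullet> b) * (LINT x|lborel. weight x * ((b \<bullet> M x) * coord_monomial p x)))"
    using integrable_weight_inner_coord_monomial[of "M _"]
    by (simp add: Bochner_Integration.integral_sum integrable_mult_right self_adjoint)
  also have "\<dots> = (\<Sum>b\<in>Basis. (V \<bullet> b) * (real (p b) * (LINT x|lborel. weight x * coord_monomial (p(b := p b - 1)) x)))"
    by (intro sum.cong refl) (simp add: gaussian_integration_by_parts)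
  finally show ?thesis
    by (simp add: expectation_def sum_divide_distrib)
qed

lemma expectation_add:
  assumes "integrable lborel (\<lambda>x. weight x * f x)" and "integrable lborel (\<lambda>x. weight x * g x)"
  shows "expectation (\<lambda>x. f x + g x) = expectation f + expectation g"
  using assms by (simp add: expectation_def distrib_left add_divide_distrib)

lemma expectation_scale: "expectation (\<lambda>x. c * f x) = c * expectation f"
  by (simp add: expectation_def mult.left_commute)

lemma integrable_weight_nonneg_coeff_poly:
  "nonneg_coeff_poly f \<Longrightarrow> integrable lborel (\<lambda>x. weight x * f x)"
proof (induction rule: nonneg_coeff_poly.induct)
  case (monomial p)
  then show ?case by (rule integrable_weight_coord_monomial)
next
  case (add f g)
  then show ?case by (simp add: distrib_left)
next
  case (scale c f)
  then show ?case by (simp add: mult.left_commute)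
qed

end

locale gaussian_form_nonneg_inverse = gaussian_form +
  assumes nonneg_preimage_Basis: "\<And>\<alpha>. \<alpha> \<in> Basis \<Longrightarrow> \<exists>V. M V = \<alpha> \<and> (\<forall>b\<in>Basis. 0 \<le> V \<bullet> b)"
begin

lemma moment_nonneg: "0 \<le> moment p"
proof (induction "monomial_degree p" arbitrary: p rule: less_induct)
  case less
  show ?case
  proof (cases p rule: exponent_raise_cases)
    case zero
    then show ?thesis by (simp add: moment_eq_1)
  next
    case (raise \<alpha> p0)
    obtain V where V: "M V = \<alpha>" "\<forall>b\<in>Basis. 0 \<le> V \<bullet> b"
      using nonneg_preimage_Basis[OF raise(1)] by blast
    have "0 \<le> moment (p0(b := p0 b - 1))" for b
      using less monomial_degree_lower_le[of p0 b] raise(3) by simp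
    then have "0 \<le> (\<Sum>b\<in>Basis. (V \<bullet> b) * (real (p0 b) * moment (p0(b := p0 b - 1))))"
      using V(2) by (intro sum_nonneg mult_nonneg_nonneg) auto
    then show ?thesis
      unfolding raise(2) moment_raise[OF raise(1) V(1)] .
  qed
qed

lemma moment_add_ge: "moment p * moment q \<le> moment (p + q)"
proof (induction "monomial_degree p" arbitrary: p rule: less_induct)
  case less
  show ?case
  proof (cases p rule: exponent_raise_cases)
    case zero
    then have "coord_monomial (p + q) = coord_monomial q" by (intro coord_monomial_cong) auto
    then show ?thesis using zero by (simp add: moment_eq_1)
  next
    case (raise \<alpha> p0)
    obtain V where V: "M V = \<alpha>" "\<forall>b\<in>Basis. 0 \<le> V \<bullet> b"
      using nonneg_preimage_Basis[OF raise(1)] by blast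
    have "p + q = (p0 + q)(\<alpha> := Suc ((p0 + q) \<alpha>))"
      using raise(2) by (auto simp: fun_eq_iff)
    then have "moment (p + q) = (\<Sum>b\<in>Basis. (V \<bullet> b) * (real ((p0 + q) b) * moment ((p0 + q)(b := (p0 + q) b - 1))))"
      by (simp only: moment_raise[OF raise(1) V(1)])
    also have "\<dots> = (\<Sum>b\<in>Basis. (V \<bullet> b) * (real (p0 b) * moment (p0(b := p0 b - 1) + q)
        + real (q b) * moment (p0 + q(b := q b - 1))))"
      by (simp only: lower_exponent_add_split[where h = "\<lambda>r. moment r"])
    also have "\<dots> \<ge> (\<Sum>b\<in>Basis. (V \<bullet> b) * (real (p0 b) * moment (p0(b := p0 b - 1))) * moment q)"
    proof (intro sum_mono)
      fix b :: 'a
      assume "b \<in> Basis"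
      have "moment (p0(b := p0 b - 1)) * moment q \<le> moment (p0(b := p0 b - 1) + q)"
        using less monomial_degree_lower_le[of p0 b] raise(3) by simp
      then have "real (p0 b) * (moment (p0(b := p0 b - 1)) * moment q)
          \<le> real (p0 b) * moment (p0(b := p0 b - 1) + q) + real (q b) * moment (p0 + q(b := q b - 1))"
        using moment_nonneg[of "p0 + q(b := q b - 1)"] by (simp add: add_increasing2 mult_left_mono)
      then show "(V \<bullet> b) * (real (p0 b) * moment (p0(b := p0 b - 1))) * moment q
          \<le> (V \<bullet> b) * (real (p0 b) * moment (p0(b := p0 b - 1) + q) + real (q b) * moment (p0 + q(b := q b - 1)))"
        using V(2) \<open>b \<in> Basis\<close> by (simp add: mult_left_mono mult.assoc)
    qed
    also have "(\<Sum>b\<in>Basis. (V \<bullet> b) * (real (p0 b) * moment (p0(b := p0 b - 1))) * moment q) = moment p * moment q"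
      unfolding raise(2) moment_raise[OF raise(1) V(1)] by (simp add: sum_distrib_right)
    finally show ?thesis .
  qed
qed

lemma expectation_nonneg: "nonneg_coeff_poly f \<Longrightarrow> 0 \<le> expectation f"
proof (induction rule: nonneg_coeff_poly.induct)
  case (monomial p)
  then show ?case by (rule moment_nonneg)
next
  case (add f g)
  then show ?case by (simp add: expectation_add integrable_weight_nonneg_coeff_poly)
next
  case (scale c f)
  then show ?case by (simp add: expectation_scale)
qed

lemma expectation_mult_ge:
  assumes "nonneg_coeff_poly f" and "nonneg_coeff_poly g"
  shows "expectation f * expectation g \<le> expectation (\<lambda>x. f x * g x)"
  using assms(1)
proof induction
  case (monomial p)
  from assms(2) show ?case
  proof induction
    case (monomial q)
    have "(\<lambda>x. coord_monomial p x * coord_monomial q x) = coord_monomial (p + q)"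
      by (simp add: coord_monomial_add fun_eq_iff)
    then show ?case by (simp add: moment_add_ge)
  next
    case (add g1 g2)
    then show ?case
      by (simp add: distrib_left expectation_add integrable_weight_nonneg_coeff_poly
          nonneg_coeff_poly_mult nonneg_coeff_poly.monomial add_mono)
  next
    case (scale c g)
    then show ?case
      by (simp add: mult.left_commute[of _ c] expectation_scale mult_left_mono)
  qed
next
  case (add f1 f2)
  then show ?case
    using assms(2)
    by (simp add: distrib_right expectation_add integrable_weight_nonneg_coeff_poly
        nonneg_coeff_poly_mult add_mono)
next
  case (scale c f)
  then show ?case
    by (simp add: mult.assoc expectation_scale mult_left_mono)
qed

end

lemma Z_matrix_posdef_nonneg_preimage:
  fixes F :: "real^'k^'k"
  assumes posdef: "\<And>v. v \<noteq> 0 \<Longrightarrow> 0 < v \<bullet> (F *v v)"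
    and offdiag: "\<And>i j. i \<noteq> j \<Longrightarrow> F $ i $ j \<le> 0"
    and image_nonneg: "\<And>i. 0 \<le> (F *v v) $ i"
  shows "0 \<le> v $ i"
proof -
  define pos where "pos = (\<chi> i. max 0 (v $ i))"
  define neg where "neg = (\<chi> i. max 0 (- v $ i))"
  have "neg = 0"
  proof (rule ccontr)
    assume "neg \<noteq> 0"
    have "0 \<le> neg \<bullet> (F *v v)"
      using image_nonneg by (simp add: inner_vec_def neg_def sum_nonneg)
    moreover have "neg \<bullet> (F *v pos) \<le> 0"
    proof -
      have "neg $ i * F $ i $ j * pos $ j \<le> 0" for i j
        using offdiag[of i j]
        by (cases "i = j") (auto simp: neg_def pos_def max_def mult_nonneg_nonpos mult_nonpos_nonneg)
      then have "(\<Sum>i\<in>UNIV. \<Sum>j\<in>UNIV. neg $ i * F $ i $ j * pos $ j) \<le> 0"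
        by (intro sum_nonpos)
      then show ?thesis
        by (simp add: inner_vec_def matrix_vector_mult_def sum_distrib_left mult_ac)
    qed
    moreover have "v = pos - neg"
      by (auto simp: vec_eq_iff pos_def neg_def max_def)
    then have "neg \<bullet> (F *v v) = neg \<bullet> (F *v pos) - neg \<bullet> (F *v neg)"
      by (simp add: matrix_vector_mult_diff_distrib inner_diff_right)
    ultimately show False
      using posdef[OF \<open>neg \<noteq> 0\<close>] by linarith
  qed
  then have "max 0 (- v $ i) = 0"
    by (metis neg_def vec_lambda_beta zero_index)
  then show ?thesis
    by (simp add: max_def split: if_splits)
qed

lemma posdef_matrix_surj:
  fixes F :: "real^'k^'k"
  assumes posdef: "\<And>v. v \<noteq> 0 \<Longrightarrow> 0 < v \<bullet> (F *v v)"
  shows "surj ((*v) F)"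
proof (rule linear_injective_imp_surjective[OF matrix_vector_mul_linear])
  show "inj ((*v) F)"
  proof (rule injI)
    fix u v
    assume "F *v u = F *v v"
    then have "F *v (u - v) = 0" by (simp add: matrix_vector_mult_diff_distrib)
    then show "u = v" using posdef[of "u - v"] by fastforce
  qed
qed simp

text \<open>\<open>block_mult F\<close> is \<open>F \<otimes> I\<^sub>n\<close> acting on configurations, so that
  \<open>gauss_weight F x = exp (- x \<bullet> block_mult F x / 2)\<close>.\<close>
definition block_mult :: "real^'k^'k \<Rightarrow> real^'n^'k \<Rightarrow> real^'n^'k" where
  "block_mult F x = (\<chi> i. \<Sum>j\<in>UNIV. F $ i $ j *\<^sub>R x $ j)"

lemma inner_block_mult: "x \<bullet> block_mult F y = (\<Sum>i\<in>UNIV. \<Sum>j\<in>UNIV. F $ i $ j * (x $ i \<bullet> y $ j))"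
  by (simp add: block_mult_def inner_vec_def[of x] inner_sum_right)

lemma linear_block_mult: "linear (block_mult F)"
  by (rule linearI)
    (simp_all add: block_mult_def vec_eq_iff scaleR_add_right sum.distrib scaleR_sum_right mult_ac)

lemma block_mult_self_adjoint:
  assumes "transpose F = F"
  shows "u \<bullet> block_mult F v = block_mult F u \<bullet> v"
proof -
  have F_sym: "F $ j $ i = F $ i $ j" for i j
    using arg_cong[OF assms, of "\<lambda>A. A $ i $ j"] by (simp add: transpose_def)
  have "u \<bullet> block_mult F v = (\<Sum>j\<in>UNIV. \<Sum>i\<in>UNIV. F $ j $ i * (u $ i \<bullet> v $ j))"
    unfolding inner_block_mult by (subst sum.swap) (simp add: F_sym)
  also have "\<dots> = v \<bullet> block_mult F u"
    unfolding inner_block_mult by (simp add: inner_commute)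
  finally show ?thesis
    by (simp add: inner_commute)
qed

lemma inner_block_mult_columns:
  "x \<bullet> block_mult F x = (\<Sum>c\<in>UNIV. (\<chi> i. x $ i $ c) \<bullet> (F *v (\<chi> i. x $ i $ c)))"
proof -
  have "x \<bullet> block_mult F x = (\<Sum>i\<in>UNIV. \<Sum>j\<in>UNIV. \<Sum>c\<in>UNIV. F $ i $ j * (x $ i $ c * x $ j $ c))"
    unfolding inner_block_mult by (simp add: inner_vec_def sum_distrib_left)
  also have "\<dots> = (\<Sum>c\<in>UNIV. \<Sum>i\<in>UNIV. \<Sum>j\<in>UNIV. F $ i $ j * (x $ i $ c * x $ j $ c))"
    by (subst sum.swap, rule sum.cong[OF refl], rule sum.swap)
  also have "\<dots> = (\<Sum>c\<in>UNIV. (\<chi> i. x $ i $ c) \<bullet> (F *v (\<chi> i. x $ i $ c)))"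
    by (simp add: inner_vec_def matrix_vector_mult_def sum_distrib_left mult_ac)
  finally show ?thesis .
qed

lemma block_mult_posdef:
  fixes F :: "real^'k^'k" and x :: "real^'n^'k"
  assumes posdef: "\<And>v. v \<noteq> 0 \<Longrightarrow> 0 < v \<bullet> (F *v v)" and "x \<noteq> 0"
  shows "0 < x \<bullet> block_mult F x"
proof -
  have nonneg: "0 \<le> v \<bullet> (F *v v)" for v
    using posdef[of v] by (cases "v = 0") auto
  obtain i c where "x $ i $ c \<noteq> 0" using \<open>x \<noteq> 0\<close> by (auto simp: vec_eq_iff)
  then have "(\<chi> i. x $ i $ c) \<noteq> 0" by (auto simp: vec_eq_iff)
  then have "0 < (\<Sum>c'\<in>{c}. (\<chi> i. x $ i $ c') \<bullet> (F *v (\<chi> i. x $ i $ c')))"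
    using posdef by simp
  also have "\<dots> \<le> (\<Sum>c'\<in>UNIV. (\<chi> i. x $ i $ c') \<bullet> (F *v (\<chi> i. x $ i $ c')))"
    by (intro sum_mono2 nonneg) auto
  finally show ?thesis
    unfolding inner_block_mult_columns .
qed

lemma block_mult_nonneg_preimage_Basis:
  fixes F :: "real^'k^'k" and \<alpha> :: "real^'n^'k"
  assumes posdef: "\<And>v. v \<noteq> 0 \<Longrightarrow> 0 < v \<bullet> (F *v v)"
    and offdiag: "\<And>i j. i \<noteq> j \<Longrightarrow> F $ i $ j \<le> 0"
    and "\<alpha> \<in> Basis"
  shows "\<exists>V. block_mult F V = \<alpha> \<and> (\<forall>b\<in>Basis. 0 \<le> V \<bullet> b)"
proof -
  obtain a u where \<alpha>: "\<alpha> = axis a u" "u \<in> Basis"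
    using \<open>\<alpha> \<in> Basis\<close> unfolding Basis_vec_def by blast
  obtain v where v_eq: "F *v v = axis a 1"
    using posdef_matrix_surj[OF posdef] by (metis surjD)
  have v_nonneg: "0 \<le> v $ i" for i
    using Z_matrix_posdef_nonneg_preimage[OF posdef offdiag, of v] v_eq by (simp add: axis_def)
  define V where "V = (\<chi> i. v $ i *\<^sub>R u)"
  have "block_mult F V $ i = (F *v v) $ i *\<^sub>R u" for i
    by (simp add: block_mult_def V_def matrix_vector_mult_def scaleR_sum_left)
  then have "block_mult F V = \<alpha>"
    by (simp add: vec_eq_iff v_eq \<alpha> axis_def)
  moreover have "0 \<le> V \<bullet> b" if "b \<in> Basis" for b
  proof -
    obtain j u' where "b = axis j u'" "u' \<in> Basis"
      using \<open>b \<in> Basis\<close> unfolding Basis_vec_def by blast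
    then show ?thesis
      using v_nonneg \<alpha>(2) by (simp add: inner_axis V_def inner_Basis)
  qed
  ultimately show ?thesis by blast
qed

lemma gaussian_form_nonneg_inverse_block_mult:
  fixes F :: "real^'k^'k"
  assumes symm: "transpose F = F"
    and posdef: "\<And>v. v \<noteq> 0 \<Longrightarrow> 0 < v \<bullet> (F *v v)"
    and offdiag: "\<And>i j. i \<noteq> j \<Longrightarrow> F $ i $ j \<le> 0"
  shows "gaussian_form_nonneg_inverse (block_mult F :: real^'n^'k \<Rightarrow> _)"
proof -
  have "gaussian_form (block_mult F :: real^'n^'k \<Rightarrow> _)"
    unfolding gaussian_form_def
    using linear_block_mult block_mult_self_adjoint[OF symm] block_mult_posdef[OF posdef] by blast
  then show ?thesis
    unfolding gaussian_form_nonneg_inverse_def gaussian_form_nonneg_inverse_axioms_def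
    using block_mult_nonneg_preimage_Basis[OF posdef offdiag] by blast
qed

lemma gauss_E_eq_expectation:
  fixes F :: "real^'k^'k" and h :: "real^'n^'k \<Rightarrow> real"
  assumes "gaussian_form (block_mult F :: real^'n^'k \<Rightarrow> _)" and "h \<in> borel_measurable borel"
  shows "gauss_E F h = gaussian_form.expectation (block_mult F) h"
proof -
  interpret gaussian_form "block_mult F :: real^'n^'k \<Rightarrow> _" by fact
  have weight: "gauss_weight F = weight"
    by (simp add: fun_eq_iff gauss_weight_def weight_def inner_block_mult)
  have "(\<lambda>x. weight x / normalizer) \<in> borel_measurable borel"
    using normalizer_pos
    by (intro borel_measurable_continuous_onI continuous_intros continuous_on_weight) auto
  then have "gauss_E F h = (LINT x|lborel. (weight x / normalizer) *\<^sub>R h x)"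
    unfolding gauss_E_def gauss_measure_def gauss_Z_def weight normalizer_def[symmetric]
    using normalizer_pos assms(2) by (intro integral_density) (auto simp: weight_def)
  then show ?thesis
    by (simp add: expectation_def)
qed

lemma nonneg_coeff_poly_inner_Basis:
  assumes "\<beta> \<in> Basis"
  shows "nonneg_coeff_poly (\<lambda>x. x \<bullet> \<beta>)"
proof -
  have "coord_monomial (\<lambda>b. if b = \<beta> then 1 else 0) = (\<lambda>x. x \<bullet> \<beta>)"
  proof
    fix x :: 'a
    have "coord_monomial (\<lambda>b. if b = \<beta> then 1 else 0) x = (\<Prod>b\<in>Basis. if b = \<beta> then x \<bullet> b else 1)"
      unfolding coord_monomial_def by (intro prod.cong) auto
    also have "\<dots> = x \<bullet> \<beta>"
      using assms by simp
    finally show "coord_monomial (\<lambda>b. if b = \<beta> then 1 else 0) x = x \<bullet> \<beta>" .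
  qed
  then show ?thesis
    by (metis nonneg_coeff_poly.monomial)
qed

lemma nonneg_coeff_poly_multinomial: "nonneg_coeff_poly (multinomial e)"
proof -
  have "nonneg_coeff_poly (\<lambda>x::real^'n^'k. x $ i \<bullet> x $ j)" for i j
  proof -
    have "x $ i \<bullet> x $ j = (\<Sum>c\<in>UNIV. (x \<bullet> axis i (axis c 1)) * (x \<bullet> axis j (axis c 1)))"
      for x :: "real^'n^'k"
      by (simp add: inner_axis inner_vec_def[of "x $ i"])
    then show ?thesis
      by (simp add: nonneg_coeff_poly_sum nonneg_coeff_poly_mult nonneg_coeff_poly_inner_Basis)
  qed
  then show ?thesis
    unfolding multinomial_def[abs_def]
    by (intro nonneg_coeff_poly_prod nonneg_coeff_poly_power) auto
qed

lemma multinomial_cone_nonneg_coeff_poly: "f \<in> multinomial_cone \<Longrightarrow> nonneg_coeff_poly f"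
  unfolding multinomial_cone_def
  by (auto intro!: nonneg_coeff_poly_sum nonneg_coeff_poly.scale nonneg_coeff_poly_multinomial)

theorem proposition1:
  fixes F :: "((real, 'k::{finite,linorder}) vec, 'k) vec"
    and f g :: "((real, 'n::finite) vec, 'k) vec \<Rightarrow> real"
  assumes symm: "transpose F = F"
    and posdef: "\<And>v. v \<noteq> 0 \<Longrightarrow> v \<bullet> (F *v v) > 0"
    and offdiag: "\<And>i j. i \<noteq> j \<Longrightarrow> F $ i $ j \<le> 0"
    and f: "f \<in> multinomial_cone" and g: "g \<in> multinomial_cone"
  shows "gauss_E F f \<ge> 0 \<and> gauss_E F (\<lambda>x. f x * g x) \<ge> gauss_E F f * gauss_E F g"
proof -
  interpret gaussian_form_nonneg_inverse "block_mult F :: ((real, 'n) vec, 'k) vec \<Rightarrow> _"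
    using gaussian_form_nonneg_inverse_block_mult[OF symm posdef offdiag] .
  have gauss_E_eq: "gauss_E F h = expectation h" if "nonneg_coeff_poly h" for h
    by (rule gauss_E_eq_expectation[OF gaussian_form_axioms
          borel_measurable_continuous_onI[OF continuous_on_nonneg_coeff_poly[OF that]]])
  have "nonneg_coeff_poly f" "nonneg_coeff_poly g"
    using f g by (simp_all add: multinomial_cone_nonneg_coeff_poly)
  then show ?thesis
    using expectation_nonneg expectation_mult_ge by (simp add: gauss_E_eq nonneg_coeff_poly_mult)
qed

end
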